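(* The first-price-or-free mechanism satisfies $c$-SCP for every integer $c\ge1$.
   Context: Setting (TFM), with unbounded block size. Each user $i$ has a true value $v_i\ge0$ and submits a single bid $b_i\ge0$. A TFM consists of an inclusion rule (run by the miner) and confirmation, payment and miner-revenue rules (run by the blockchain on the included bids). First-price-or-free mechanism: include all bids; let $b_1\ge\dots\ge b_m$ be the included bids. Only the highest bid $b_1$ is confirmed. If $m=1$, the confirmed user pays nothing; if $m\ge2$, the confirmed user pays $b_1$. The miner receives all payment. Strategic players: the miner together with some users may have those users bid untruthfully after seeing all other bids, inject fake bids (true value $0$), and include any set of available bids instead of following the inclusion rule. Utility of a coalition: miner revenue plus $v-p$ for each confirmed transaction of the coalition with true value $v$ and payment $p$. $c$-SCP: for every coalition of the miner with between $1$ and $c$ users, the joint utility is maximized when its users bid truthfully and the miner follows the mechanism, whatever the other users' bids. *)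

theory Defs
  imports Complex_Main "HOL-Library.Multiset"
begin

text \<open>A block is the list of included bid amounts (its order is the order in the block).
  The inclusion rule maps the list of submitted bids to the list of (distinct) positions
  of the submitted bids that the honest miner includes. The confirmation, payment and
  miner-revenue rules are run on the block only.\<close>

record tfm =
  incl :: "real list \<Rightarrow> nat list"
  conf :: "real list \<Rightarrow> nat set"
  pay  :: "real list \<Rightarrow> nat \<Rightarrow> real"
  mrev :: "real list \<Rightarrow> real"

text \<open>Owner of a bid: a non-coalition user, the i-th coalition user, or a fake bid
  injected by the miner (true value 0).\<close>
datatype owner = Other | Member nat | Fake

definition coal_util :: "tfm \<Rightarrow> real list \<Rightarrow> (owner \<times> real) list \<Rightarrow> real" where
  "coal_util M vs T =
     (let B = map snd T in
      mrev M B +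
      (\<Sum>j\<in>{j \<in> conf M B. j < length T}.
         (case fst (T ! j) of
            Member i \<Rightarrow> vs ! i - pay M B j
          | Fake \<Rightarrow> 0 - pay M B j
          | Other \<Rightarrow> 0)))"

definition honest_util :: "tfm \<Rightarrow> real list \<Rightarrow> real list \<Rightarrow> real" where
  "honest_util M vs others =
     (let S = map (\<lambda>i. (Member i, vs ! i)) [0..<length vs] @ map (\<lambda>b. (Other, b)) others
      in coal_util M vs (map (\<lambda>j. S ! j) (incl M (map snd S))))"

definition available :: "real list \<Rightarrow> real list \<Rightarrow> real list \<Rightarrow> (owner \<times> real) list" where
  "available bs others fs =
     map (\<lambda>i. (Member i, bs ! i)) [0..<length bs] @ map (\<lambda>b. (Other, b)) others
     @ map (\<lambda>b. (Fake, b)) fs"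

definition c_SCP :: "tfm \<Rightarrow> nat \<Rightarrow> bool" where
  "c_SCP M c \<longleftrightarrow>
     (\<forall>others vs bs fs T.
        (\<forall>b\<in>set others. b \<ge> 0) \<longrightarrow>
        1 \<le> length vs \<longrightarrow> length vs \<le> c \<longrightarrow> (\<forall>v\<in>set vs. v \<ge> 0) \<longrightarrow>
        length bs = length vs \<longrightarrow> (\<forall>b\<in>set bs. b \<ge> 0) \<longrightarrow>
        (\<forall>b\<in>set fs. b \<ge> 0) \<longrightarrow>
        mset T \<subseteq># mset (available bs others fs) \<longrightarrow>
        coal_util M vs T \<le> honest_util M vs others)"

definition top_idx :: "real list \<Rightarrow> nat" where
  "top_idx B = (LEAST j. j < length B \<and> B ! j = Max (set B))"

definition fpf_conf :: "real list \<Rightarrow> nat set" where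
  "fpf_conf B = (if B = [] then {} else {top_idx B})"

definition fpf_pay :: "real list \<Rightarrow> nat \<Rightarrow> real" where
  "fpf_pay B j = (if j \<in> fpf_conf B \<and> length B \<ge> 2 then B ! j else 0)"

definition fpf_rev :: "real list \<Rightarrow> real" where
  "fpf_rev B = (\<Sum>j\<in>fpf_conf B. fpf_pay B j)"

definition first_price_or_free :: tfm where
  "first_price_or_free =
     \<lparr> incl = (\<lambda>bids. [0..<length bids]), conf = fpf_conf, pay = fpf_pay, mrev = fpf_rev \<rparr>"

end

theory Submission
  imports Defs
begin

text \<open>Under first-price-or-free the coalition's joint utility is always bounded by the
  largest of its members' true values and the other users' bids: a confirmed member
  contributes its value (its payment goes back to the miner), a confirmed fake bid
  contributes nothing, and a confirmed other user contributes at most its own bid as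
  payment. Honest behaviour attains this bound, because the maximal bid among at least two
  submitted bids is confirmed and pays in full.\<close>

lemma top_idx_nth_Max:
  assumes "B \<noteq> []"
  shows "top_idx B < length B" "B ! top_idx B = Max (set B)"
proof -
  obtain j where "j < length B \<and> B ! j = Max (set B)"
    using assms by (metis Max_in finite_set set_empty in_set_conv_nth)
  then have "top_idx B < length B \<and> B ! top_idx B = Max (set B)"
    unfolding top_idx_def by (rule LeastI)
  then show "top_idx B < length B" "B ! top_idx B = Max (set B)" by auto
qed

lemma coal_util_fpf_Nil: "coal_util first_price_or_free vs [] = 0"
  unfolding coal_util_def first_price_or_free_def
  by (simp add: fpf_rev_def fpf_conf_def)

lemma coal_util_fpf:
  assumes "T \<noteq> []"
  defines "k \<equiv> top_idx (map snd T)"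
  shows "coal_util first_price_or_free vs T =
    (case fst (T ! k) of
       Member i \<Rightarrow> vs ! i
     | Fake \<Rightarrow> 0
     | Other \<Rightarrow> fpf_pay (map snd T) k)"
proof -
  have k_less: "k < length T"
    using top_idx_nth_Max(1)[of "map snd T"] assms by simp
  have conf: "fpf_conf (map snd T) = {k}"
    using assms by (simp add: fpf_conf_def k_def)
  then have "{j \<in> fpf_conf (map snd T). j < length T} = {k}"
    using k_less by auto
  moreover have "{j. j = k \<and> j < length T} = {k}"
    using k_less by auto
  ultimately show ?thesis
    unfolding coal_util_def first_price_or_free_def
    by (simp add: Let_def fpf_rev_def conf split: owner.split)
qed

lemma coal_util_fpf_le:
  assumes sub: "mset T \<subseteq># mset (available bs others fs)"
    and len: "length bs = length vs"
    and M_nonneg: "0 \<le> M"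
    and M_ub: "\<And>x. x \<in> set (vs @ others) \<Longrightarrow> x \<le> M"
  shows "coal_util first_price_or_free vs T \<le> M"
proof (cases "T = []")
  case True
  then show ?thesis using coal_util_fpf_Nil M_nonneg by simp
next
  case False
  define k where "k = top_idx (map snd T)"
  have "k < length T"
    using top_idx_nth_Max(1)[of "map snd T"] False by (simp add: k_def)
  then have avail: "T ! k \<in> set (available bs others fs)"
    using sub by (metis mset_subset_eqD nth_mem set_mset_mset)
  have util: "coal_util first_price_or_free vs T =
      (case fst (T ! k) of Member i \<Rightarrow> vs ! i | Fake \<Rightarrow> 0
         | Other \<Rightarrow> fpf_pay (map snd T) k)"
    unfolding k_def by (rule coal_util_fpf[OF False])
  show ?thesis
  proof (cases "fst (T ! k)")
    case Other
    then have "snd (T ! k) \<le> M"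
      using avail M_ub unfolding available_def by auto
    moreover have "fpf_pay (map snd T) k \<in> {snd (T ! k), 0}"
      using \<open>k < length T\<close> by (simp add: fpf_pay_def)
    ultimately show ?thesis using util Other M_nonneg by auto
  next
    case (Member i)
    then have "i < length vs"
      using avail len unfolding available_def by auto
    then show ?thesis using util Member M_ub by simp
  next
    case Fake
    then show ?thesis using util M_nonneg by simp
  qed
qed

lemma honest_util_fpf:
  assumes "vs \<noteq> []"
  shows "honest_util first_price_or_free vs others = Max (set (vs @ others))"
proof -
  define S where
    "S = map (\<lambda>i. (Member i, vs ! i)) [0..<length vs] @ map (\<lambda>b. (Other, b)) others"
  define k where "k = top_idx (map snd S)"
  have bids: "map snd S = vs @ others"
    unfolding S_def by (simp add: map_nth comp_def)
  have S_ne: "S \<noteq> []" using assms by (simp add: S_def)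
  have k_less: "k < length S"
    using top_idx_nth_Max(1)[of "map snd S"] S_ne by (simp add: k_def)
  have "honest_util first_price_or_free vs others = coal_util first_price_or_free vs S"
    unfolding honest_util_def S_def[symmetric] first_price_or_free_def
    by (simp add: Let_def map_nth)
  also have "\<dots> = (case fst (S ! k) of Member i \<Rightarrow> vs ! i | Fake \<Rightarrow> 0
                     | Other \<Rightarrow> fpf_pay (map snd S) k)"
    unfolding k_def by (rule coal_util_fpf[OF S_ne])
  also have "\<dots> = snd (S ! k)"
  proof (cases "k < length vs")
    case True
    then show ?thesis by (simp add: S_def nth_append)
  next
    case False
    have "length S = length vs + length others" and "0 < length vs"
      using assms by (simp_all add: S_def)
    then have "2 \<le> length S" using False k_less by linarith
    have "fst (S ! k) = Other"
      using False k_less by (simp add: S_def nth_append)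
    then show ?thesis
      using S_ne k_less \<open>2 \<le> length S\<close>
      by (simp add: fpf_pay_def fpf_conf_def k_def)
  qed
  also have "\<dots> = Max (set (vs @ others))"
  proof -
    have "snd (S ! k) = map snd S ! k" using k_less by simp
    then show ?thesis
      using top_idx_nth_Max(2)[of "vs @ others"] assms by (simp add: k_def bids)
  qed
  finally show ?thesis .
qed

theorem mainTheorem9:
  fixes c :: nat
  assumes "c \<ge> 1"
  shows "c_SCP first_price_or_free c"
  unfolding c_SCP_def
proof (intro allI impI)
  fix others vs bs fs T
  assume "1 \<le> length vs" and vs_nonneg: "\<forall>v\<in>set vs. v \<ge> (0::real)"
    and "length bs = length vs" and "mset T \<subseteq># mset (available bs others fs)"
  define M where "M = Max (set (vs @ others))"
  have vs_ne: "vs \<noteq> []" using \<open>1 \<le> length vs\<close> by auto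
  have M_ub: "\<And>x. x \<in> set (vs @ others) \<Longrightarrow> x \<le> M"
    unfolding M_def by simp
  have "0 \<le> M"
  proof -
    have "hd vs \<in> set vs" using vs_ne by simp
    then show ?thesis using M_ub[of "hd vs"] vs_nonneg by fastforce
  qed
  have "coal_util first_price_or_free vs T \<le> M"
    using coal_util_fpf_le \<open>mset T \<subseteq># _\<close> \<open>length bs = length vs\<close> \<open>0 \<le> M\<close> M_ub
    by blast
  then show "coal_util first_price_or_free vs T \<le> honest_util first_price_or_free vs others"
    using honest_util_fpf[OF vs_ne] by (simp add: M_def)
qed

end
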